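(* Let $(\Phi,D)$ be a domain-free continuous information algebra and $(\Psi,D)$ its associated labeled information algebra. Let $x\in D$ and $\psi,\phi\in\Phi$ with $\psi=\psi^{\Rightarrow x}$ and $\phi=\phi^{\Rightarrow x}$. Then $\psi\ll\phi$ implies $(\psi,x)\ll_x(\phi,x)$. Furthermore, if $(\Phi,D)$ is s-continuous, then $\psi\ll\phi$ if and only if $(\psi,x)\ll_x(\phi,x)$.
   Context: A domain-free information algebra $(\Phi,D)$ consists of a set $\Phi$, a lattice $D$, a combination $\otimes$ and a focusing $(\psi,x)\mapsto\psi^{\Rightarrow x}$ ($x\in D$) such that: $\otimes$ is associative, commutative with neutral element $e$; $(\psi^{\Rightarrow y})^{\Rightarrow x}=\psi^{\Rightarrow x\wedge y}$; $(\phi^{\Rightarrow x}\otimes\psi)^{\Rightarrow x}=\phi^{\Rightarrow x}\otimes\psi^{\Rightarrow x}$; every $\psi$ has some $x$ with $\psi^{\Rightarrow x}=\psi$; $\psi\otimes\psi^{\Rightarrow x}=\psi$. Order: $\psi\le\phi$ iff $\psi\otimes\phi=\phi$ (same definition in the labeled algebra below); suprema refer to this order. $a\ll b$ means: for every directed $X$ with $b\le\vee X$ there is $c\in X$ with $a\le c$. $(\Phi,D)$, with $D$ having a top element, is continuous (resp. s-continuous) if there exists $\Gamma\subseteq\Phi$, closed under combination and containing $e$, such that every directed subset of $\Gamma$ has a supremum in $\Phi$ and $\phi=\vee\{\psi\in\Gamma:\psi\ll\phi\}$ for all $\phi$ (resp. $\phi^{\Rightarrow x}=\vee\{\psi\in\Gamma:\psi=\psi^{\Rightarrow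 x}\ll\phi\}$ for all $\phi,x$). The associated labeled information algebra $(\Psi,D)$ has $\Psi=\{(\phi,x)\in\Phi\times D:\phi=\phi^{\Rightarrow x}\}$, labeling $d(\phi,x)=x$, combination $(\phi,x)\otimes(\psi,y)=(\phi\otimes\psi,x\vee y)$ and marginalization $(\phi,x)^{\downarrow y}=(\phi^{\Rightarrow y},y)$ for $y\le x$. $\Psi_x=\{(\phi,x)\in\Psi\}$, and $\ll_x$ is the way-below relation in the poset $(\Psi_x,\le)$. *)

theory Defs
  imports Main
begin

definition directed_in :: "('a \<Rightarrow> 'a \<Rightarrow> bool) \<Rightarrow> 'a set \<Rightarrow> bool" where
  "directed_in le X \<longleftrightarrow> X \<noteq> {} \<and> (\<forall>a\<in>X. \<forall>b\<in>X. \<exists>c\<in>X. le a c \<and> le b c)"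

definition is_lub_in :: "('a \<Rightarrow> 'a \<Rightarrow> bool) \<Rightarrow> 'a set \<Rightarrow> 'a set \<Rightarrow> 'a \<Rightarrow> bool" where
  "is_lub_in le S X s \<longleftrightarrow> s \<in> S \<and> (\<forall>a\<in>X. le a s) \<and> (\<forall>u\<in>S. (\<forall>a\<in>X. le a u) \<longrightarrow> le s u)"

definition way_below_in :: "('a \<Rightarrow> 'a \<Rightarrow> bool) \<Rightarrow> 'a set \<Rightarrow> 'a \<Rightarrow> 'a \<Rightarrow> bool" where
  "way_below_in le S a b \<longleftrightarrow>
     (\<forall>X. X \<subseteq> S \<longrightarrow> directed_in le X \<longrightarrow>
        (\<forall>s. is_lub_in le S X s \<longrightarrow> le b s \<longrightarrow> (\<exists>c\<in>X. le a c)))"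

text \<open>\<Phi> is the type 'a, D is the lattice type 'd; comb is \<otimes>, e the neutral element,
  foc \<psi> x is the focusing \<psi>^{\<Rightarrow>x}.\<close>

definition domain_free_ia ::
  "('a \<Rightarrow> 'a \<Rightarrow> 'a) \<Rightarrow> 'a \<Rightarrow> ('a \<Rightarrow> 'd::lattice \<Rightarrow> 'a) \<Rightarrow> bool" where
  "domain_free_ia comb e foc \<longleftrightarrow>
     (\<forall>a b c. comb (comb a b) c = comb a (comb b c)) \<and>
     (\<forall>a b. comb a b = comb b a) \<and>
     (\<forall>a. comb e a = a) \<and>
     (\<forall>\<psi> x y. foc (foc \<psi> y) x = foc \<psi> (inf x y)) \<and>
     (\<forall>\<phi> \<psi> x. foc (comb (foc \<phi> x) \<psi>) x = comb (foc \<phi> x) (foc \<psi> x)) \<and>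
     (\<forall>\<psi>. \<exists>x. foc \<psi> x = \<psi>) \<and>
     (\<forall>\<psi> x. comb \<psi> (foc \<psi> x) = \<psi>)"

definition info_le :: "('a \<Rightarrow> 'a \<Rightarrow> 'a) \<Rightarrow> 'a \<Rightarrow> 'a \<Rightarrow> bool" where
  "info_le comb a b \<longleftrightarrow> comb a b = b"

definition df_way_below :: "('a \<Rightarrow> 'a \<Rightarrow> 'a) \<Rightarrow> 'a \<Rightarrow> 'a \<Rightarrow> bool" where
  "df_way_below comb a b \<longleftrightarrow> way_below_in (info_le comb) UNIV a b"

definition basis_cond :: "('a \<Rightarrow> 'a \<Rightarrow> 'a) \<Rightarrow> 'a \<Rightarrow> 'a set \<Rightarrow> bool" where
  "basis_cond comb e \<Gamma> \<longleftrightarrow>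
     (\<forall>a\<in>\<Gamma>. \<forall>b\<in>\<Gamma>. comb a b \<in> \<Gamma>) \<and> e \<in> \<Gamma> \<and>
     (\<forall>X. X \<subseteq> \<Gamma> \<longrightarrow> directed_in (info_le comb) X \<longrightarrow>
          (\<exists>s. is_lub_in (info_le comb) UNIV X s))"

definition continuous_ia ::
  "('a \<Rightarrow> 'a \<Rightarrow> 'a) \<Rightarrow> 'a \<Rightarrow> ('a \<Rightarrow> 'd::lattice \<Rightarrow> 'a) \<Rightarrow> bool" where
  "continuous_ia comb e foc \<longleftrightarrow>
     (\<exists>t::'d. \<forall>x. x \<le> t) \<and>
     (\<exists>\<Gamma>. basis_cond comb e \<Gamma> \<and>
        (\<forall>\<phi>. is_lub_in (info_le comb) UNIV {\<psi>\<in>\<Gamma>. df_way_below comb \<psi> \<phi>} \<phi>))"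

definition s_continuous_ia ::
  "('a \<Rightarrow> 'a \<Rightarrow> 'a) \<Rightarrow> 'a \<Rightarrow> ('a \<Rightarrow> 'd::lattice \<Rightarrow> 'a) \<Rightarrow> bool" where
  "s_continuous_ia comb e foc \<longleftrightarrow>
     (\<exists>t::'d. \<forall>x. x \<le> t) \<and>
     (\<exists>\<Gamma>. basis_cond comb e \<Gamma> \<and>
        (\<forall>\<phi> x. is_lub_in (info_le comb) UNIV
                 {\<psi>\<in>\<Gamma>. \<psi> = foc \<psi> x \<and> df_way_below comb \<psi> \<phi>} (foc \<phi> x)))"

definition labeled_carrier :: "('a \<Rightarrow> 'd \<Rightarrow> 'a) \<Rightarrow> ('a \<times> 'd) set" where
  "labeled_carrier foc = {(\<phi>, x). \<phi> = foc \<phi> x}"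

definition labeled_comb ::
  "('a \<Rightarrow> 'a \<Rightarrow> 'a) \<Rightarrow> ('a \<times> 'd::lattice) \<Rightarrow> ('a \<times> 'd) \<Rightarrow> ('a \<times> 'd)" where
  "labeled_comb comb p q = (comb (fst p) (fst q), sup (snd p) (snd q))"

definition labeled_marg :: "('a \<Rightarrow> 'd \<Rightarrow> 'a) \<Rightarrow> ('a \<times> 'd) \<Rightarrow> 'd \<Rightarrow> ('a \<times> 'd)" where
  "labeled_marg foc p y = (foc (fst p) y, y)"

definition labeled_le :: "('a \<Rightarrow> 'a \<Rightarrow> 'a) \<Rightarrow> ('a \<times> 'd::lattice) \<Rightarrow> ('a \<times> 'd) \<Rightarrow> bool" where
  "labeled_le comb p q \<longleftrightarrow> labeled_comb comb p q = q"

definition labeled_slice :: "('a \<Rightarrow> 'd \<Rightarrow> 'a) \<Rightarrow> 'd \<Rightarrow> ('a \<times> 'd) set" where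
  "labeled_slice foc x = {p \<in> labeled_carrier foc. snd p = x}"

definition way_below_x ::
  "('a \<Rightarrow> 'a \<Rightarrow> 'a) \<Rightarrow> ('a \<Rightarrow> 'd::lattice \<Rightarrow> 'a) \<Rightarrow> 'd \<Rightarrow> ('a \<times> 'd) \<Rightarrow> ('a \<times> 'd) \<Rightarrow> bool" where
  "way_below_x comb foc x p q \<longleftrightarrow> way_below_in (labeled_le comb) (labeled_slice foc x) p q"

end

theory Submission
  imports Defs
begin

text \<open>Let F = focused_at foc x be the set of elements fixed by focusing on x. For a in F,
  a is below u iff a is below the focus of u on x, so F is a coreflective subposet of \<Phi>: a
  supremum in F of a subset of F is also its supremum in \<Phi>, and therefore way-below in \<Phi>
  between elements of F implies way-below in F. The pairing a \<mapsto> (a, x) is an order isomorphism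
  from F onto \<Psi>_x, which transports way-below. Conversely, under s-continuity \<phi>, being its own
  focus on x, is the supremum of the directed set of basis elements in F that are way below \<phi>;
  this is a supremum in F as well, so anything way below \<phi> in F lies below one of them and is
  thus way below \<phi> in \<Phi>.\<close>

lemma is_lub_in_image_iff:
  assumes "\<And>a b. a \<in> S \<Longrightarrow> b \<in> S \<Longrightarrow> le' (f a) (f b) \<longleftrightarrow> le a b" and "X \<subseteq> S" "s \<in> S"
  shows "is_lub_in le' (f ` S) (f ` X) (f s) \<longleftrightarrow> is_lub_in le S X s"
proof -
  have "\<And>a b. a \<in> X \<Longrightarrow> b \<in> S \<Longrightarrow> le' (f a) (f b) \<longleftrightarrow> le a b"
       "\<And>b. b \<in> S \<Longrightarrow> le' (f s) (f b) \<longleftrightarrow> le s b"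
    using assms by auto
  then show ?thesis
    using assms(3) unfolding is_lub_in_def by auto
qed

lemma directed_in_image_iff:
  assumes "\<And>a b. a \<in> S \<Longrightarrow> b \<in> S \<Longrightarrow> le' (f a) (f b) \<longleftrightarrow> le a b" and "X \<subseteq> S"
  shows "directed_in le' (f ` X) \<longleftrightarrow> directed_in le X"
proof -
  have "\<And>a b. a \<in> X \<Longrightarrow> b \<in> X \<Longrightarrow> le' (f a) (f b) \<longleftrightarrow> le a b"
    using assms by auto
  then show ?thesis
    unfolding directed_in_def by auto
qed

lemma way_below_in_image_iff:
  assumes le: "\<And>a b. a \<in> S \<Longrightarrow> b \<in> S \<Longrightarrow> le' (f a) (f b) \<longleftrightarrow> le a b"
    and "a \<in> S" "b \<in> S"
  shows "way_below_in le' (f ` S) (f a) (f b) \<longleftrightarrow> way_below_in le S a b"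
proof -
  have lub_image: "(\<forall>t. is_lub_in le' (f ` S) Y t \<longrightarrow> Q t) \<longleftrightarrow>
      (\<forall>s\<in>S. is_lub_in le' (f ` S) Y (f s) \<longrightarrow> Q (f s))" for Y Q
    unfolding is_lub_in_def by blast
  have lub: "(\<forall>s. is_lub_in le S X s \<longrightarrow> Q s) \<longleftrightarrow>
      (\<forall>s\<in>S. is_lub_in le S X s \<longrightarrow> Q s)" for X Q
    unfolding is_lub_in_def by blast
  have above_image: "(\<exists>c\<in>f ` X. le' (f a) c) \<longleftrightarrow> (\<exists>c\<in>X. le a c)" if "X \<subseteq> S" for X
    using that assms by auto
  show ?thesis
    unfolding way_below_in_def all_subset_image lub_image lub
    using assms above_image directed_in_image_iff[where f=f and le=le, OF le]
      is_lub_in_image_iff[where f=f and le=le, OF le]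
    by (simp cong: imp_cong)
qed

lemma is_lub_in_subset:
  "is_lub_in le U X s \<Longrightarrow> S \<subseteq> U \<Longrightarrow> s \<in> S \<Longrightarrow> is_lub_in le S X s"
  unfolding is_lub_in_def by blast

lemma is_lub_in_coreflective_subset:
  assumes "\<And>u. r u \<in> S" and "\<And>a u. a \<in> S \<Longrightarrow> le a (r u) \<longleftrightarrow> le a u"
    and "X \<subseteq> S" and "is_lub_in le S X s"
  shows "is_lub_in le UNIV X s"
  using assms unfolding is_lub_in_def by (metis UNIV_I subsetD)

lemma way_below_in_coreflective_subset:
  assumes "\<And>u. r u \<in> S" and "\<And>a u. a \<in> S \<Longrightarrow> le a (r u) \<longleftrightarrow> le a u"
    and "way_below_in le UNIV a b"
  shows "way_below_in le S a b"
  using assms(3) is_lub_in_coreflective_subset[where r=r and S=S and le=le, OF assms(1,2)]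
  unfolding way_below_in_def by blast

lemma way_below_inD:
  "way_below_in le S a b \<Longrightarrow> X \<subseteq> S \<Longrightarrow> directed_in le X \<Longrightarrow> is_lub_in le S X s \<Longrightarrow> le b s
    \<Longrightarrow> \<exists>c\<in>X. le a c"
  unfolding way_below_in_def by blast

lemma way_below_in_le_trans:
  assumes "transp le" and "le a b" and "way_below_in le S b c"
  shows "way_below_in le S a c"
  using assms unfolding way_below_in_def transp_def by meson

lemma way_below_in_least:
  assumes "\<And>b. le a b"
  shows "way_below_in le S a c"
  using assms unfolding way_below_in_def directed_in_def by blast

lemma way_below_in_join:
  assumes trans: "transp le" and "way_below_in le S a c" and "way_below_in le S b c"
    and join: "\<And>d. le a d \<Longrightarrow> le b d \<Longrightarrow> le j d"
  shows "way_below_in le S j c"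
  unfolding way_below_in_def
proof (intro allI impI)
  fix X s
  assume X: "X \<subseteq> S" "directed_in le X" "is_lub_in le S X s" "le c s"
  obtain ca cb where "ca \<in> X" "le a ca" "cb \<in> X" "le b cb"
    using X way_below_inD assms(2,3) by metis
  moreover from this obtain d where "d \<in> X" "le ca d" "le cb d"
    using X(2) unfolding directed_in_def by blast
  ultimately show "\<exists>d\<in>X. le j d"
    using trans join unfolding transp_def by meson
qed

definition focused_at :: "('a \<Rightarrow> 'd \<Rightarrow> 'a) \<Rightarrow> 'd \<Rightarrow> 'a set" where
  "focused_at foc x = {a. foc a x = a}"

lemma labeled_slice_eq_image: "labeled_slice foc x = (\<lambda>a. (a, x)) ` focused_at foc x"
  unfolding labeled_slice_def labeled_carrier_def focused_at_def by force

lemma labeled_le_same_label: "labeled_le comb (a, x) (b, x) \<longleftrightarrow> info_le comb a b"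
  unfolding labeled_le_def labeled_comb_def info_le_def by simp

lemma way_below_x_iff_way_below_in_focused_at:
  assumes "a \<in> focused_at foc x" "b \<in> focused_at foc x"
  shows "way_below_x comb foc x (a, x) (b, x) \<longleftrightarrow>
    way_below_in (info_le comb) (focused_at foc x) a b"
  unfolding way_below_x_def labeled_slice_eq_image
  using assms way_below_in_image_iff[where le'="labeled_le comb" and f="\<lambda>a. (a, x)"
      and le="info_le comb"]
  by (simp add: labeled_le_same_label)

locale info_algebra =
  fixes comb :: "'a \<Rightarrow> 'a \<Rightarrow> 'a" and e :: 'a and foc :: "'a \<Rightarrow> 'd::lattice \<Rightarrow> 'a"
  assumes domain_free: "domain_free_ia comb e foc"
begin

lemma comb_assoc: "comb (comb a b) c = comb a (comb b c)"
  and comb_commute: "comb a b = comb b a"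
  and comb_neutral: "comb e a = a"
  and foc_foc: "foc (foc a y) x = foc a (inf x y)"
  and foc_comb_foc: "foc (comb (foc a x) b) x = comb (foc a x) (foc b x)"
  and comb_foc_absorb: "comb a (foc a x) = a"
  using domain_free unfolding domain_free_ia_def by blast+

lemma comb_idem: "comb a a = a"
proof -
  obtain x where "foc a x = a"
    using domain_free unfolding domain_free_ia_def by blast
  then show ?thesis using comb_foc_absorb[of a x] by simp
qed

lemma info_le_refl: "info_le comb a a"
  unfolding info_le_def by (rule comb_idem)

lemma transp_info_le: "transp (info_le comb)"
  unfolding transp_def info_le_def by (metis comb_assoc)

lemma info_le_comb_left: "info_le comb a (comb a b)"
  unfolding info_le_def by (simp add: comb_assoc[symmetric] comb_idem)

lemma info_le_comb_right: "info_le comb b (comb a b)"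
  using info_le_comb_left[of b a] by (simp add: comb_commute)

lemma comb_least: "info_le comb a c \<Longrightarrow> info_le comb b c \<Longrightarrow> info_le comb (comb a b) c"
  unfolding info_le_def by (simp add: comb_assoc)

lemma neutral_least: "info_le comb e a"
  unfolding info_le_def by (rule comb_neutral)

lemma focus_le: "info_le comb (foc u x) u"
  unfolding info_le_def by (subst comb_commute) (rule comb_foc_absorb)

lemma focus_mem_focused_at: "foc u x \<in> focused_at foc x"
  unfolding focused_at_def by (simp add: foc_foc)

lemma neutral_mem_focused_at: "e \<in> focused_at foc x"
  unfolding focused_at_def using comb_foc_absorb[of e x] by (simp add: comb_neutral)

lemma comb_mem_focused_at:
  "a \<in> focused_at foc x \<Longrightarrow> b \<in> focused_at foc x \<Longrightarrow> comb a b \<in> focused_at foc x"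
  unfolding focused_at_def using foc_comb_foc[of a x b] by simp

lemma le_focus_iff:
  assumes "a \<in> focused_at foc x"
  shows "info_le comb a (foc u x) \<longleftrightarrow> info_le comb a u"
proof
  show "info_le comb a (foc u x) \<Longrightarrow> info_le comb a u"
    using transp_info_le focus_le unfolding transp_def by blast
next
  assume "info_le comb a u"
  then have "foc u x = foc (comb (foc a x) u) x"
    using assms unfolding focused_at_def info_le_def by simp
  also have "\<dots> = comb a (foc u x)"
    using assms foc_comb_foc[of a x u] unfolding focused_at_def by simp
  finally show "info_le comb a (foc u x)"
    unfolding info_le_def by simp
qed

lemma way_below_in_focused_at_if_way_below:
  "df_way_below comb a b \<Longrightarrow> way_below_in (info_le comb) (focused_at foc x) a b"
  unfolding df_way_below_def
  by (rule way_below_in_coreflective_subset[where r="\<lambda>u. foc u x" and S="focused_at foc x"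
        and le="info_le comb", OF focus_mem_focused_at le_focus_iff])

lemma directed_in_if_comb_closed:
  "e \<in> B \<Longrightarrow> (\<And>a b. a \<in> B \<Longrightarrow> b \<in> B \<Longrightarrow> comb a b \<in> B) \<Longrightarrow> directed_in (info_le comb) B"
  unfolding directed_in_def using info_le_comb_left info_le_comb_right by blast

lemma way_below_if_way_below_in_focused_at:
  assumes s_cont: "s_continuous_ia comb e foc" and b: "b \<in> focused_at foc x"
    and a_b: "way_below_in (info_le comb) (focused_at foc x) a b"
  shows "df_way_below comb a b"
proof -
  obtain \<Gamma> where basis: "basis_cond comb e \<Gamma>"
    and lub: "is_lub_in (info_le comb) UNIV
      {\<gamma>\<in>\<Gamma>. \<gamma> = foc \<gamma> x \<and> df_way_below comb \<gamma> b} (foc b x)"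
    using s_cont unfolding s_continuous_ia_def by blast
  define B where "B = {\<gamma>\<in>\<Gamma>. \<gamma> = foc \<gamma> x \<and> df_way_below comb \<gamma> b}"
  have B_subset: "B \<subseteq> focused_at foc x"
    unfolding B_def focused_at_def by auto
  have neutral_in_basis: "e \<in> \<Gamma>"
    and comb_in_basis: "\<And>c d. c \<in> \<Gamma> \<Longrightarrow> d \<in> \<Gamma> \<Longrightarrow> comb c d \<in> \<Gamma>"
    using basis unfolding basis_cond_def by blast+
  have "e \<in> B"
    using neutral_in_basis neutral_mem_focused_at
      way_below_in_least[where le="info_le comb", OF neutral_least]
    unfolding B_def focused_at_def df_way_below_def by auto
  moreover have "comb c d \<in> B" if "c \<in> B" "d \<in> B" for c d
  proof -
    have "comb c d \<in> focused_at foc x"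
      using that B_subset comb_mem_focused_at by blast
    moreover have "df_way_below comb (comb c d) b"
      using that way_below_in_join[where j="comb c d", OF transp_info_le _ _ comb_least]
      unfolding B_def df_way_below_def by blast
    ultimately show ?thesis
      using that comb_in_basis unfolding B_def focused_at_def by auto
  qed
  ultimately have "directed_in (info_le comb) B"
    by (rule directed_in_if_comb_closed)
  moreover have "is_lub_in (info_le comb) (focused_at foc x) B b"
    using is_lub_in_subset[OF lub subset_UNIV] b unfolding B_def focused_at_def by simp
  ultimately obtain \<gamma> where "\<gamma> \<in> B" "info_le comb a \<gamma>"
    using way_below_inD[OF a_b B_subset] info_le_refl by blast
  then show ?thesis
    using way_below_in_le_trans[OF transp_info_le] unfolding B_def df_way_below_def by blast
qed

end

theorem lemma4p6:
  fixes comb :: "'a \<Rightarrow> 'a \<Rightarrow> 'a" and e :: 'a and foc :: "'a \<Rightarrow> 'd::lattice \<Rightarrow> 'a"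
    and x :: 'd and \<psi> \<phi> :: 'a
  assumes "domain_free_ia comb e foc"
    and "continuous_ia comb e foc"
    and "\<psi> = foc \<psi> x" and "\<phi> = foc \<phi> x"
  shows "(df_way_below comb \<psi> \<phi> \<longrightarrow> way_below_x comb foc x (\<psi>, x) (\<phi>, x))
     \<and> (s_continuous_ia comb e foc \<longrightarrow>
          (df_way_below comb \<psi> \<phi> \<longleftrightarrow> way_below_x comb foc x (\<psi>, x) (\<phi>, x)))"
proof -
  interpret info_algebra comb e foc
    using assms(1) by (rule info_algebra.intro)
  have focused: "\<psi> \<in> focused_at foc x" "\<phi> \<in> focused_at foc x"
    using assms(3,4) unfolding focused_at_def by simp_all
  show ?thesis
    using way_below_x_iff_way_below_in_focused_at[OF focused]
      way_below_in_focused_at_if_way_below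
      way_below_if_way_below_in_focused_at[OF _ focused(2)]
    by blast
qed

end
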